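(* Let $b>1$, $p\ge1$, $R\subseteq\{0,\ldots,p-1\}$, and $I\subseteq\mathbb{N}$ finite and non-empty. The initial state of $\mathcal{C}_{R,p,I}$ is not ultimately-equivalent to any other state of $\mathcal{C}_{R,p,I}$.
   Context: $A_b=\{0,\ldots,b-1\}$. $\mathcal{A}_{R,p}$: states $\{0,\ldots,p-1\}$, initial $0$, final $R$, transitions $n\xrightarrow{a}(nb+a)\bmod p$. With $m=\max I$, $\mathcal{B}_I$: states $\{0,\ldots,m\}\cup\{\bot\}$, initial $0$, final $I$, transitions $i\xrightarrow{a}ib+a$ if $ib+a\le m$, else $i\xrightarrow{a}\bot$, and $\bot\xrightarrow{a}\bot$. $\mathcal{C}_{R,p,I}$ is the accessible part (states reachable from the initial state $(0,0)$) of the product of $\mathcal{A}_{R,p}$ and $\mathcal{B}_I$, with componentwise transitions and $(s,t)$ final iff exactly one of $s\in R$, $t\in I$ holds. Two states $x,y$ are ultimately-equivalent if there is $m\ge1$ with $x\cdot u=y\cdot u$ for all words $u$ with $|u|\ge m$. *)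

theory Defs
  imports Main
begin

text \<open>Words over the alphabet A_b = {0,...,b-1} are lists of naturals with all letters < b.
  The state bottom of B_I is represented by None, state i by Some i.\<close>

definition words :: "nat \<Rightarrow> nat list set" where
  "words b = {w. set w \<subseteq> {..<b}}"

definition stepA :: "nat \<Rightarrow> nat \<Rightarrow> nat \<Rightarrow> nat \<Rightarrow> nat" where
  "stepA b p n a = (n * b + a) mod p"

definition stepB :: "nat \<Rightarrow> nat \<Rightarrow> nat option \<Rightarrow> nat \<Rightarrow> nat option" where
  "stepB b m t a = (case t of None \<Rightarrow> None
                    | Some i \<Rightarrow> (if i * b + a \<le> m then Some (i * b + a) else None))"

definition stepC :: "nat \<Rightarrow> nat \<Rightarrow> nat set \<Rightarrow> nat \<times> nat option \<Rightarrow> nat \<Rightarrow> nat \<times> nat option" where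
  "stepC b p I q a = (stepA b p (fst q) a, stepB b (Max I) (snd q) a)"

definition runC :: "nat \<Rightarrow> nat \<Rightarrow> nat set \<Rightarrow> nat \<times> nat option \<Rightarrow> nat list \<Rightarrow> nat \<times> nat option" where
  "runC b p I q u = foldl (stepC b p I) q u"

definition initC :: "nat \<times> nat option" where
  "initC = (0, Some 0)"

definition statesC :: "nat \<Rightarrow> nat \<Rightarrow> nat set \<Rightarrow> (nat \<times> nat option) set" where
  "statesC b p I = {runC b p I initC w | w. w \<in> words b}"

text \<open>Final states (exactly one of s in R, t in I); not needed for the statement.\<close>
definition finalC :: "nat set \<Rightarrow> nat set \<Rightarrow> nat \<times> nat option \<Rightarrow> bool" where
  "finalC R I q = ((fst q \<in> R) \<noteq> (case snd q of None \<Rightarrow> False | Some t \<Rightarrow> t \<in> I))"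

definition ult_equiv :: "nat \<Rightarrow> nat \<Rightarrow> nat set \<Rightarrow> nat \<times> nat option \<Rightarrow> nat \<times> nat option \<Rightarrow> bool" where
  "ult_equiv b p I x y = (\<exists>m\<ge>1. \<forall>u \<in> words b. length u \<ge> m \<longrightarrow> runC b p I x u = runC b p I y u)"

end

theory Submission
  imports Defs
begin

text \<open>Reading zeros from the initial state never leaves it. From any other accessible state
  the zeros multiply the \<open>\<B>\<close>-component by \<open>b\<close> (or send it to \<open>\<bottom>\<close>), so it can only return to
  \<open>0\<close> if it already was \<open>0\<close>; and in an accessible state the \<open>\<B>\<close>-component \<open>i\<close> determines the
  \<open>\<A>\<close>-component as \<open>i mod p\<close>, so that state would be the initial one.\<close>

definition mod_consistent :: "nat \<Rightarrow> nat \<times> nat option \<Rightarrow> bool" where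
  "mod_consistent p q \<longleftrightarrow> (\<forall>i. snd q = Some i \<longrightarrow> fst q = i mod p)"

lemma runC_snoc: "runC b p I q (w @ [a]) = stepC b p I (runC b p I q w) a"
  by (simp add: runC_def)

lemma mod_consistent_stepC:
  assumes "mod_consistent p q"
  shows "mod_consistent p (stepC b p I q a)"
  using assms
  by (auto simp: mod_consistent_def stepC_def stepA_def stepB_def split: option.splits if_splits)
     (metis mod_add_left_eq mod_mult_left_eq)

lemma mod_consistent_runC:
  assumes "mod_consistent p q"
  shows "mod_consistent p (runC b p I q w)"
  using assms by (induction w rule: rev_induct) (simp_all add: runC_def mod_consistent_stepC)

lemma mod_consistent_statesC:
  assumes "q \<in> statesC b p I"
  shows "mod_consistent p q"
  using assms mod_consistent_runC[of p initC]
  by (auto simp: statesC_def mod_consistent_def initC_def)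

lemma mod_consistent_eq_initC:
  assumes "mod_consistent p q" and "snd q = Some 0"
  shows "q = initC"
  using assms by (cases q) (simp add: mod_consistent_def initC_def)

lemma runC_zeros_initC: "runC b p I initC (replicate k 0) = initC"
proof (induction k)
  case 0
  then show ?case by (simp add: runC_def)
next
  case (Suc k)
  have "replicate (Suc k) (0::nat) = replicate k 0 @ [0]"
    by (simp add: replicate_append_same)
  with Suc show ?case
    by (simp add: runC_snoc stepC_def stepA_def stepB_def initC_def)
qed

lemma snd_runC_zeros_Some:
  assumes "snd (runC b p I q (replicate k 0)) = Some j"
  shows "\<exists>i. snd q = Some i \<and> j = i * b ^ k"
  using assms
proof (induction k arbitrary: j)
  case 0
  then show ?case by (simp add: runC_def)
next
  case (Suc k)
  have "replicate (Suc k) (0::nat) = replicate k 0 @ [0]"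
    by (simp add: replicate_append_same)
  with Suc.prems obtain j' where "snd (runC b p I q (replicate k 0)) = Some j'" "j = j' * b"
    by (auto simp: runC_snoc stepC_def stepB_def split: option.splits if_splits)
  with Suc.IH show ?case by (auto simp: mult.assoc mult.commute)
qed

theorem lemma43:
  fixes b p :: nat and R I :: "nat set" and y :: "nat \<times> nat option"
  assumes "b > 1" and "p \<ge> 1" and "R \<subseteq> {..<p}"
    and "finite I" and "I \<noteq> {}"
    and "y \<in> statesC b p I" and "y \<noteq> initC"
  shows "\<not> ult_equiv b p I initC y"
proof
  assume "ult_equiv b p I initC y"
  then obtain m where m: "\<forall>u \<in> words b. length u \<ge> m \<longrightarrow> runC b p I initC u = runC b p I y u"
    unfolding ult_equiv_def by blast
  have "replicate m 0 \<in> words b"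
    using assms(1) by (auto simp: words_def)
  with m have "runC b p I y (replicate m 0) = initC"
    using runC_zeros_initC[of b p I m] by force
  then obtain i where "snd y = Some i" "0 = i * b ^ m"
    using snd_runC_zeros_Some[of b p I y m 0] by (auto simp: initC_def)
  with assms(1) have "snd y = Some 0" by simp
  then have "y = initC"
    using mod_consistent_eq_initC mod_consistent_statesC[OF assms(6)] by blast
  with assms(7) show False ..
qed

end
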